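(* Let $N\ge1$, $\alpha>0$, $\tau_0\ge0$, let $c_1,\dots,c_N\in\mathbb{C}\setminus\{0\}$ and let $\mu_1,\dots,\mu_N\in\mathbb{C}$ be pairwise distinct. Let $h:=\tau_0+2$, $Y:=C([-1,1];\mathbb{C})$, $X:=C([-h,0];Y)$ (supremum norms), $J(x,r):=\sum_{i=1}^Nc_ie^{-\mu_i|x-r|}$, and define $L\in\mathcal{L}(X,Y)$ by $(L\phi)(x):=\int_{-1}^1J(x,r)\,\phi(-\tau_0-|x-r|,r)\,dr$. Let $A$ be the operator on $X$ with $D(A)=\{\phi\in X:\phi'\in X,\ \phi'(0)=-\alpha\phi(0)+L\phi\}$, $A\phi=\phi'$. For $\lambda\in\mathbb{C}$ put $k_j(\lambda):=\lambda+\mu_j$, $\mathcal{S}:=\{\lambda:k_i^2=k_j^2\text{ for some }i\neq j\}$ and $$\mathcal{P}(\rho):=\frac{e^{\lambda\tau_0}(\lambda+\alpha)}{2}\prod_{j=1}^N(\rho^2-k_j(\lambda)^2)+\sum_{i=1}^Nc_ik_i(\lambda)\prod_{j\neq i}(\rho^2-k_j(\lambda)^2).$$ Suppose $\lambda\notin\mathcal{S}$ and that $\mathcal{P}$ has $2N$ distinct roots, denoted $\pm\rho_i(\lambda)$, $i=1,\dots,N$. Define the $2N\times2N$ matrix $$S(\lambda):=\begin{bmatrix}S^-_\lambda&S^+_\lambda\\S^+_\lambda&S^-_\lambda\end{bmatrix},\qquad [S^-_\lambda]_{j,i}:=\frac{e^{\rho_i(\lambda)}}{\lambda+\mu_j-\rho_i(\lambda)},\quad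 [S^+_\lambda]_{j,i}:=\frac{e^{-\rho_i(\lambda)}}{\lambda+\mu_j+\rho_i(\lambda)}.$$ If $\det S(\lambda)=0$ and $k_j(\lambda)\neq\pm\rho_i(\lambda)$ for all $i,j=1,\dots,N$, then $\lambda$ belongs to the point spectrum of $A$, and a corresponding eigenfunction is $\varepsilon_\lambda\otimes q_\lambda$, where $$q_\lambda(x)=\sum_{i=1}^N\big[\gamma_ie^{\rho_i(\lambda)x}+\gamma_{-i}e^{-\rho_i(\lambda)x}\big],\qquad x\in[-1,1],$$ and $\Gamma_\lambda=[\gamma_1,\dots,\gamma_N,\gamma_{-1},\dots,\gamma_{-N}]$ is a non-trivial solution of $S(\lambda)\Gamma_\lambda=0$.
   Context: $(\varepsilon_\lambda\otimes q)(\theta):=e^{\lambda\theta}q$ for $\theta\in[-h,0]$. The operator $A$ generates the semigroup of the linearised neural field equation $\dot V(t)=-\alpha V(t)+LV_t$ on $[-1,1]$ with delay $\tau(x,r)=\tau_0+|x-r|$. *)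

theory Defs
  imports "HOL-Analysis.Analysis" "Jordan_Normal_Form.Determinant"
begin

text \<open>Indices are 0-based: i = 0..N-1 stands for the paper's i = 1..N.
  An element of Y = C([-1,1];C) is represented by a function real => complex
  (only its values on [-1,1] matter); an element of X = C([-h,0];Y) by a
  function real => real => complex (theta, x), only values on [-h,0] x [-1,1] matter.\<close>

definition ynorm :: "(real \<Rightarrow> complex) \<Rightarrow> real" where
  "ynorm f = Sup ((\<lambda>x. cmod (f x)) ` {-1..1})"

definition inY :: "(real \<Rightarrow> complex) \<Rightarrow> bool" where
  "inY f \<longleftrightarrow> continuous_on {-1..1} f"

definition inX :: "real \<Rightarrow> (real \<Rightarrow> real \<Rightarrow> complex) \<Rightarrow> bool" where
  "inX h \<phi> \<longleftrightarrow> (\<forall>\<theta>\<in>{-h..0}. inY (\<phi> \<theta>)) \<and>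
     (\<forall>\<theta>\<in>{-h..0}. ((\<lambda>t. ynorm (\<lambda>x. \<phi> t x - \<phi> \<theta> x)) \<longlongrightarrow> 0) (at \<theta> within {-h..0}))"

definition hasXderiv :: "real \<Rightarrow> (real \<Rightarrow> real \<Rightarrow> complex) \<Rightarrow> (real \<Rightarrow> real \<Rightarrow> complex) \<Rightarrow> bool" where
  "hasXderiv h \<phi> \<psi> \<longleftrightarrow> (\<forall>\<theta>\<in>{-h..0}.
     ((\<lambda>t. ynorm (\<lambda>x. (\<phi> t x - \<phi> \<theta> x) / complex_of_real (t - \<theta>) - \<psi> \<theta> x)) \<longlongrightarrow> 0)
       (at \<theta> within {-h..0}))"

definition Jker :: "nat \<Rightarrow> (nat \<Rightarrow> complex) \<Rightarrow> (nat \<Rightarrow> complex) \<Rightarrow> real \<Rightarrow> real \<Rightarrow> complex" where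
  "Jker N c \<mu> x r = (\<Sum>i<N. c i * exp (- \<mu> i * complex_of_real \<bar>x - r\<bar>))"

definition Lop :: "nat \<Rightarrow> (nat \<Rightarrow> complex) \<Rightarrow> (nat \<Rightarrow> complex) \<Rightarrow> real \<Rightarrow>
    (real \<Rightarrow> real \<Rightarrow> complex) \<Rightarrow> real \<Rightarrow> complex" where
  "Lop N c \<mu> \<tau>0 \<phi> x = integral {-1..1} (\<lambda>r. Jker N c \<mu> x r * \<phi> (- \<tau>0 - \<bar>x - r\<bar>) r)"

text \<open>Graph of A: A_rel phi psi means phi in D(A) and A phi = psi (on [-h,0] x [-1,1]),
  with h = tau0 + 2.\<close>
definition A_rel :: "nat \<Rightarrow> real \<Rightarrow> real \<Rightarrow> (nat \<Rightarrow> complex) \<Rightarrow> (nat \<Rightarrow> complex) \<Rightarrow>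
    (real \<Rightarrow> real \<Rightarrow> complex) \<Rightarrow> (real \<Rightarrow> real \<Rightarrow> complex) \<Rightarrow> bool" where
  "A_rel N \<alpha> \<tau>0 c \<mu> \<phi> \<psi> \<longleftrightarrow>
     inX (\<tau>0 + 2) \<phi> \<and> inX (\<tau>0 + 2) \<psi> \<and> hasXderiv (\<tau>0 + 2) \<phi> \<psi> \<and>
     (\<forall>x\<in>{-1..1}. \<psi> 0 x = - complex_of_real \<alpha> * \<phi> 0 x + Lop N c \<mu> \<tau>0 \<phi> x)"

definition Xzero :: "real \<Rightarrow> (real \<Rightarrow> real \<Rightarrow> complex) \<Rightarrow> bool" where
  "Xzero h \<phi> \<longleftrightarrow> (\<forall>\<theta>\<in>{-h..0}. \<forall>x\<in>{-1..1}. \<phi> \<theta> x = 0)"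

definition eigenfunction :: "nat \<Rightarrow> real \<Rightarrow> real \<Rightarrow> (nat \<Rightarrow> complex) \<Rightarrow> (nat \<Rightarrow> complex) \<Rightarrow>
    complex \<Rightarrow> (real \<Rightarrow> real \<Rightarrow> complex) \<Rightarrow> bool" where
  "eigenfunction N \<alpha> \<tau>0 c \<mu> lam \<phi> \<longleftrightarrow>
     \<not> Xzero (\<tau>0 + 2) \<phi> \<and> A_rel N \<alpha> \<tau>0 c \<mu> \<phi> (\<lambda>\<theta> x. lam * \<phi> \<theta> x)"

definition point_spectrum :: "nat \<Rightarrow> real \<Rightarrow> real \<Rightarrow> (nat \<Rightarrow> complex) \<Rightarrow> (nat \<Rightarrow> complex) \<Rightarrow> complex set" where
  "point_spectrum N \<alpha> \<tau>0 c \<mu> = {lam. \<exists>\<phi>. eigenfunction N \<alpha> \<tau>0 c \<mu> lam \<phi>}"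

definition eps_tensor :: "complex \<Rightarrow> (real \<Rightarrow> complex) \<Rightarrow> real \<Rightarrow> real \<Rightarrow> complex" where
  "eps_tensor lam q = (\<lambda>\<theta> x. exp (lam * complex_of_real \<theta>) * q x)"

definition kk :: "(nat \<Rightarrow> complex) \<Rightarrow> complex \<Rightarrow> nat \<Rightarrow> complex" where
  "kk \<mu> lam j = lam + \<mu> j"

definition Sset :: "nat \<Rightarrow> (nat \<Rightarrow> complex) \<Rightarrow> complex set" where
  "Sset N \<mu> = {lam. \<exists>i<N. \<exists>j<N. i \<noteq> j \<and> (kk \<mu> lam i)\<^sup>2 = (kk \<mu> lam j)\<^sup>2}"

definition Ppoly :: "nat \<Rightarrow> real \<Rightarrow> real \<Rightarrow> (nat \<Rightarrow> complex) \<Rightarrow> (nat \<Rightarrow> complex) \<Rightarrow>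
    complex \<Rightarrow> complex \<Rightarrow> complex" where
  "Ppoly N \<alpha> \<tau>0 c \<mu> lam \<rho> =
     exp (lam * complex_of_real \<tau>0) * (lam + complex_of_real \<alpha>) / 2 *
       (\<Prod>j<N. \<rho>\<^sup>2 - (kk \<mu> lam j)\<^sup>2)
     + (\<Sum>i<N. c i * kk \<mu> lam i * (\<Prod>j\<in>{..<N} - {i}. \<rho>\<^sup>2 - (kk \<mu> lam j)\<^sup>2))"

definition Sminus :: "(nat \<Rightarrow> complex) \<Rightarrow> (nat \<Rightarrow> complex) \<Rightarrow> complex \<Rightarrow> nat \<Rightarrow> nat \<Rightarrow> complex" where
  "Sminus \<mu> \<rho> lam j i = exp (\<rho> i) / (lam + \<mu> j - \<rho> i)"

definition Splus :: "(nat \<Rightarrow> complex) \<Rightarrow> (nat \<Rightarrow> complex) \<Rightarrow> complex \<Rightarrow> nat \<Rightarrow> nat \<Rightarrow> complex" where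
  "Splus \<mu> \<rho> lam j i = exp (- \<rho> i) / (lam + \<mu> j + \<rho> i)"

definition Smat :: "nat \<Rightarrow> (nat \<Rightarrow> complex) \<Rightarrow> (nat \<Rightarrow> complex) \<Rightarrow> complex \<Rightarrow> complex mat" where
  "Smat N \<mu> \<rho> lam = mat (2 * N) (2 * N) (\<lambda>(j, i).
     if j < N then (if i < N then Sminus \<mu> \<rho> lam j i else Splus \<mu> \<rho> lam j (i - N))
     else (if i < N then Splus \<mu> \<rho> lam (j - N) i else Sminus \<mu> \<rho> lam (j - N) (i - N)))"

text \<open>q(x) = sum_i gamma_i e^{rho_i x} + gamma_{-i} e^{-rho_i x}, with
  Gamma = [gamma_1..gamma_N, gamma_{-1}..gamma_{-N}] stored 0-based.\<close>
definition qfun :: "nat \<Rightarrow> (nat \<Rightarrow> complex) \<Rightarrow> complex vec \<Rightarrow> real \<Rightarrow> complex" where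
  "qfun N \<rho> \<Gamma> x = (\<Sum>i<N. \<Gamma> $ i * exp (\<rho> i * complex_of_real x)
                         + \<Gamma> $ (N + i) * exp (- \<rho> i * complex_of_real x))"

end

theory Submission
  imports Defs
begin

(* For continuous q, the function eps_lambda (x) q is differentiable in X with derivative
   lambda (eps_lambda (x) q), so it is an eigenfunction of A as soon as q does not vanish and
   satisfies the boundary condition  lambda q = -alpha q + L (eps_lambda (x) q).
   For q a combination of exp(+-rho_i x) the integral defining L is elementary:
   exp(-k|x-r|) exp(rho r) integrates over [-1,1] to exp(rho x) 2k/(k^2 - rho^2) plus boundary
   terms in exp(-k(x+1)) and exp(k(x-1)).  Since rho_i is a root of P, the partial fraction
   expansion of P(rho) / prod_j (rho^2 - k_j^2) makes the first parts add up to (lambda + alpha) q,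
   while S(lambda) Gamma = 0 says precisely that the boundary terms cancel.  Finally q is nonzero
   because exponentials with distinct exponents are linearly independent. *)

lemma ynorm_le:
  assumes "\<And>x. x \<in> {-1..1} \<Longrightarrow> cmod (f x) \<le> B"
  shows "ynorm f \<le> B" and "0 \<le> ynorm f"
proof -
  show "ynorm f \<le> B"
    unfolding ynorm_def using assms by (intro cSup_least) auto
  have "bdd_above ((\<lambda>x. cmod (f x)) ` {-1..1})"
    by (rule bdd_aboveI2[where M = B]) (simp add: assms)
  then have "cmod (f 0) \<le> ynorm f"
    unfolding ynorm_def by (intro cSup_upper) auto
  then show "0 \<le> ynorm f"
    using norm_ge_zero order_trans by blast
qed

lemma ynorm_mult_tendsto_zero:
  assumes "continuous_on {-1..1} q" and "(g \<longlongrightarrow> 0) F"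
  shows "((\<lambda>t. ynorm (\<lambda>x. g t * q x)) \<longlongrightarrow> 0) F"
proof -
  obtain M where M: "\<forall>x\<in>{-1..1}. cmod (q x) \<le> M"
    using compact_imp_bounded[OF compact_continuous_image[OF assms(1)]]
    by (auto simp: bounded_iff)
  have bound: "cmod (g t * q x) \<le> cmod (g t) * M" if "x \<in> {-1..1}" for t x
    using M that by (simp add: norm_mult mult_left_mono)
  have lim: "((\<lambda>t. cmod (g t) * M) \<longlongrightarrow> 0) F"
    using tendsto_mult_left_zero[OF tendsto_norm_zero[OF assms(2)]] .
  show ?thesis
    by (rule tendsto_sandwich[OF _ _ tendsto_const lim]) (use ynorm_le[OF bound] in auto)
qed

lemma exp_difference_quotient_tendsto:
  fixes a :: complex
  shows "((\<lambda>t. (exp (a * of_real t) - exp (a * of_real \<theta>)) / of_real (t - \<theta>))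
           \<longlongrightarrow> a * exp (a * of_real \<theta>)) (at \<theta> within S)"
proof -
  have "((\<lambda>z. exp (a * z)) has_field_derivative a * exp (a * of_real \<theta>)) (at (of_real \<theta>))"
    by (auto intro!: derivative_eq_intros)
  then have "((\<lambda>z. (exp (a * z) - exp (a * of_real \<theta>)) / (z - of_real \<theta>))
               \<longlongrightarrow> a * exp (a * of_real \<theta>)) (at (of_real \<theta>))"
    by (simp add: has_field_derivative_iff)
  moreover have "filterlim complex_of_real (at (of_real \<theta>)) (at \<theta> within S)"
    unfolding filterlim_at by (auto simp: eventually_at_filter intro!: tendsto_eq_intros)
  ultimately show ?thesis
    using filterlim_compose by fastforce
qed

lemma inX_eps_tensor:
  assumes "continuous_on {-1..1} q"
  shows "inX h (eps_tensor lam q)"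
  unfolding inX_def inY_def eps_tensor_def
proof (intro conjI ballI)
  fix \<theta> :: real
  show "continuous_on {-1..1} (\<lambda>x. exp (lam * of_real \<theta>) * q x)"
    using assms by (intro continuous_intros)
  have "((\<lambda>t. exp (lam * of_real t) - exp (lam * of_real \<theta>)) \<longlongrightarrow> 0) (at \<theta> within {-h..0})"
    by (rule LIM_zero) (intro tendsto_intros)
  from ynorm_mult_tendsto_zero[OF assms this]
  show "((\<lambda>t. ynorm (\<lambda>x. exp (lam * of_real t) * q x - exp (lam * of_real \<theta>) * q x)) \<longlongrightarrow> 0)
          (at \<theta> within {-h..0})"
    by (simp add: algebra_simps)
qed

lemma hasXderiv_eps_tensor:
  assumes "continuous_on {-1..1} q"
  shows "hasXderiv h (eps_tensor lam q) (\<lambda>\<theta> x. lam * eps_tensor lam q \<theta> x)"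
  unfolding hasXderiv_def eps_tensor_def
proof
  fix \<theta> :: real
  have "((\<lambda>t. (exp (lam * of_real t) - exp (lam * of_real \<theta>)) / of_real (t - \<theta>)
           - lam * exp (lam * of_real \<theta>)) \<longlongrightarrow> 0) (at \<theta> within {-h..0})"
    by (rule LIM_zero[OF exp_difference_quotient_tendsto])
  from ynorm_mult_tendsto_zero[OF assms this]
  show "((\<lambda>t. ynorm (\<lambda>x. (exp (lam * of_real t) * q x - exp (lam * of_real \<theta>) * q x) /
             of_real (t - \<theta>) - lam * (exp (lam * of_real \<theta>) * q x))) \<longlongrightarrow> 0)
          (at \<theta> within {-h..0})"
    by (simp add: algebra_simps diff_divide_distrib)
qed

lemma eigenfunction_eps_tensorI:
  assumes "continuous_on {-1..1} q" and "\<tau>0 \<ge> 0" and "x0 \<in> {-1..1}" and "q x0 \<noteq> 0"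
    and boundary: "\<And>x. x \<in> {-1..1} \<Longrightarrow> Lop N c \<mu> \<tau>0 (eps_tensor lam q) x = (lam + of_real \<alpha>) * q x"
  shows "eigenfunction N \<alpha> \<tau>0 c \<mu> lam (eps_tensor lam q)"
proof -
  have scaled: "(\<lambda>\<theta> x. lam * eps_tensor lam q \<theta> x) = eps_tensor lam (\<lambda>x. lam * q x)"
    by (auto simp: eps_tensor_def fun_eq_iff)
  have "A_rel N \<alpha> \<tau>0 c \<mu> (eps_tensor lam q) (\<lambda>\<theta> x. lam * eps_tensor lam q \<theta> x)"
    unfolding A_rel_def
  proof (intro conjI ballI)
    show "inX (\<tau>0 + 2) (eps_tensor lam q)"
      using assms(1) by (rule inX_eps_tensor)
    show "inX (\<tau>0 + 2) (\<lambda>\<theta> x. lam * eps_tensor lam q \<theta> x)"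
      unfolding scaled using assms(1) by (intro inX_eps_tensor continuous_intros)
    show "hasXderiv (\<tau>0 + 2) (eps_tensor lam q) (\<lambda>\<theta> x. lam * eps_tensor lam q \<theta> x)"
      using assms(1) by (rule hasXderiv_eps_tensor)
    show "lam * eps_tensor lam q 0 x = - of_real \<alpha> * eps_tensor lam q 0 x + Lop N c \<mu> \<tau>0 (eps_tensor lam q) x"
      if "x \<in> {-1..1}" for x
      using boundary[OF that] by (simp add: eps_tensor_def algebra_simps)
  qed
  moreover have "\<not> Xzero (\<tau>0 + 2) (eps_tensor lam q)"
    using assms(2-4) by (auto simp: Xzero_def eps_tensor_def)
  ultimately show ?thesis
    unfolding eigenfunction_def by blast
qed

lemma has_integral_exp_linear:
  fixes a :: complex and u v :: real
  assumes "a \<noteq> 0" and "u \<le> v"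
  shows "((\<lambda>r. exp (a * of_real r)) has_integral (exp (a * of_real v) - exp (a * of_real u)) / a) {u..v}"
proof -
  have "((\<lambda>z. exp (a * z) / a) has_field_derivative exp (a * of_real r)) (at (of_real r))" for r :: real
    using assms(1) by (auto intro!: derivative_eq_intros)
  then have "((\<lambda>r. exp (a * of_real r) / a) has_vector_derivative exp (a * of_real r)) (at r within {u..v})" for r
    by (rule has_vector_derivative_at_within[OF has_vector_derivative_real_field])
  from fundamental_theorem_of_calculus[OF assms(2) this] show ?thesis
    by (simp add: diff_divide_distrib)
qed

definition abs_exp_integral :: "complex \<Rightarrow> complex \<Rightarrow> real \<Rightarrow> complex" where
  "abs_exp_integral k \<rho> x = exp (\<rho> * of_real x) * (2 * k / (k\<^sup>2 - \<rho>\<^sup>2))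
     - exp (- k * (of_real x + 1)) * exp (- \<rho>) / (k + \<rho>)
     - exp (k * (of_real x - 1)) * exp \<rho> / (k - \<rho>)"

lemma has_integral_abs_exp:
  fixes k \<rho> :: complex and x :: real
  assumes "k \<noteq> \<rho>" and "k \<noteq> - \<rho>" and x: "x \<in> {-1..1}"
  shows "((\<lambda>r. exp (- k * of_real \<bar>x - r\<bar>) * exp (\<rho> * of_real r)) has_integral abs_exp_integral k \<rho> x) {-1..1}"
proof -
  have nz: "k + \<rho> \<noteq> 0" "\<rho> - k \<noteq> 0"
    using assms(1,2) by (auto simp: add_eq_0_iff)
  let ?g = "\<lambda>r. exp (- k * of_real \<bar>x - r\<bar>) * exp (\<rho> * of_real r)"
  let ?left = "exp (- k * of_real x) * ((exp ((k + \<rho>) * of_real x) - exp ((k + \<rho>) * of_real (-1))) / (k + \<rho>))"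
  let ?right = "exp (k * of_real x) * ((exp ((\<rho> - k) * of_real 1) - exp ((\<rho> - k) * of_real x)) / (\<rho> - k))"
  have "(?g has_integral ?left) {-1..x}"
  proof (rule has_integral_eq[OF _ has_integral_mult_right[OF has_integral_exp_linear[OF nz(1)]]])
    show "exp (- k * of_real x) * exp ((k + \<rho>) * of_real r) = ?g r" if "r \<in> {-1..x}" for r
      using that by (simp add: mult_exp_exp algebra_simps)
  qed (use x in auto)
  moreover have "(?g has_integral ?right) {x..1}"
  proof (rule has_integral_eq[OF _ has_integral_mult_right[OF has_integral_exp_linear[OF nz(2)]]])
    show "exp (k * of_real x) * exp ((\<rho> - k) * of_real r) = ?g r" if "r \<in> {x..1}" for r
      using that by (simp add: mult_exp_exp algebra_simps)
  qed (use x in auto)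
  ultimately have integral: "(?g has_integral ?left + ?right) {-1..1}"
    by (rule has_integral_combine[rotated 2]) (use x in auto)
  have left: "?left = exp (\<rho> * of_real x) / (k + \<rho>) - exp (- k * (of_real x + 1)) * exp (- \<rho>) / (k + \<rho>)"
    by (simp add: right_diff_distrib diff_divide_distrib mult_exp_exp algebra_simps)
  have right: "?right = exp (k * (of_real x - 1)) * exp \<rho> / (\<rho> - k) - exp (\<rho> * of_real x) / (\<rho> - k)"
    by (simp add: right_diff_distrib diff_divide_distrib mult_exp_exp algebra_simps)
  have rational: "A / (k + \<rho>) - B / (k + \<rho>) + (C / (\<rho> - k) - A / (\<rho> - k))
      = A * (2 * k / (k\<^sup>2 - \<rho>\<^sup>2)) - B / (k + \<rho>) - C / (k - \<rho>)" for A B C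
  proof -
    have "k - \<rho> \<noteq> 0"
      using assms(1) by simp
    moreover have "k\<^sup>2 - \<rho>\<^sup>2 = (k + \<rho>) * (k - \<rho>)"
      by (simp add: power2_eq_square algebra_simps)
    ultimately have "A * (2 * k / (k\<^sup>2 - \<rho>\<^sup>2)) = A / (k + \<rho>) + A / (k - \<rho>)"
      using nz by (simp add: field_simps)
    moreover have "X / (\<rho> - k) = - (X / (k - \<rho>))" for X
      by (metis divide_minus_right minus_diff_eq)
    ultimately show ?thesis
      by (simp add: algebra_simps)
  qed
  show ?thesis
    using integral unfolding left right rational abs_exp_integral_def .
qed

lemma Lop_eps_tensor_qfun:
  assumes kne: "\<forall>i<N. \<forall>j<N. kk \<mu> lam j \<noteq> \<rho> i \<and> kk \<mu> lam j \<noteq> - \<rho> i" and x: "x \<in> {-1..1}"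
  shows "Lop N c \<mu> \<tau>0 (eps_tensor lam (qfun N \<rho> \<Gamma>)) x =
    (\<Sum>j<N. \<Sum>i<N. exp (- (lam * of_real \<tau>0)) * c j *
       (\<Gamma> $ i * abs_exp_integral (kk \<mu> lam j) (\<rho> i) x
        + \<Gamma> $ (N + i) * abs_exp_integral (kk \<mu> lam j) (- \<rho> i) x))"
proof -
  let ?E = "exp (- (lam * of_real \<tau>0))"
  let ?h = "\<lambda>j r. exp (- kk \<mu> lam j * of_real \<bar>x - r\<bar>)"
  have integrand: "Jker N c \<mu> x r * eps_tensor lam (qfun N \<rho> \<Gamma>) (- \<tau>0 - \<bar>x - r\<bar>) r =
     (\<Sum>j<N. \<Sum>i<N. ?E * c j * (\<Gamma> $ i * (?h j r * exp (\<rho> i * of_real r))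
        + \<Gamma> $ (N + i) * (?h j r * exp (- \<rho> i * of_real r))))" for r
  proof -
    let ?e = "exp (lam * of_real (- \<tau>0 - \<bar>x - r\<bar>))"
    let ?Q = "\<lambda>i. \<Gamma> $ i * exp (\<rho> i * of_real r) + \<Gamma> $ (N + i) * exp (- \<rho> i * of_real r)"
    have kernel: "exp (- \<mu> j * of_real \<bar>x - r\<bar>) * ?e = ?E * ?h j r" for j
      by (simp add: mult_exp_exp kk_def algebra_simps)
    have "Jker N c \<mu> x r * eps_tensor lam (qfun N \<rho> \<Gamma>) (- \<tau>0 - \<bar>x - r\<bar>) r
        = (\<Sum>j<N. c j * exp (- \<mu> j * of_real \<bar>x - r\<bar>)) * (\<Sum>i<N. ?e * ?Q i)"
      unfolding Jker_def eps_tensor_def qfun_def by (simp only: sum_distrib_left)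
    also have "\<dots> = (\<Sum>j<N. \<Sum>i<N. c j * (exp (- \<mu> j * of_real \<bar>x - r\<bar>) * ?e) * ?Q i)"
      by (simp only: sum_product mult.assoc)
    also have "\<dots> = (\<Sum>j<N. \<Sum>i<N. ?E * c j * (\<Gamma> $ i * (?h j r * exp (\<rho> i * of_real r))
        + \<Gamma> $ (N + i) * (?h j r * exp (- \<rho> i * of_real r))))"
      by (simp only: kernel) (simp add: algebra_simps)
    finally show ?thesis .
  qed
  have "((\<lambda>r. \<Sum>j<N. \<Sum>i<N. ?E * c j * (\<Gamma> $ i * (?h j r * exp (\<rho> i * of_real r))
        + \<Gamma> $ (N + i) * (?h j r * exp (- \<rho> i * of_real r)))) has_integral
     (\<Sum>j<N. \<Sum>i<N. ?E * c j *
       (\<Gamma> $ i * abs_exp_integral (kk \<mu> lam j) (\<rho> i) x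
        + \<Gamma> $ (N + i) * abs_exp_integral (kk \<mu> lam j) (- \<rho> i) x))) {-1..1}"
    using kne x
    by (intro has_integral_sum finite_lessThan has_integral_mult_right has_integral_add
          has_integral_abs_exp) auto
  then show ?thesis
    unfolding Lop_def integrand by (rule integral_unique)
qed

lemma sum_divide_eq_of_prod_eq:
  fixes D a :: "nat \<Rightarrow> 'a::field"
  assumes "\<forall>j<N. D j \<noteq> 0"
    and "Z * (\<Prod>j<N. D j) + (\<Sum>i<N. a i * (\<Prod>j\<in>{..<N} - {i}. D j)) = 0"
  shows "(\<Sum>i<N. a i / D i) = - Z"
proof -
  have "(\<Prod>j\<in>{..<N} - {i}. D j) = (\<Prod>j<N. D j) / D i" if "i < N" for i
    using that assms(1) by (simp add: prod_diff1)
  then have "(\<Prod>j<N. D j) * (Z + (\<Sum>i<N. a i / D i)) = 0"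
    using assms(2) by (simp add: sum_distrib_left algebra_simps)
  with assms(1) show ?thesis
    by (simp add: add_eq_0_iff)
qed

lemma Ppoly_root_imp_char_eq:
  assumes kne: "\<forall>j<N. kk \<mu> lam j \<noteq> z \<and> kk \<mu> lam j \<noteq> - z"
    and root: "Ppoly N \<alpha> \<tau>0 c \<mu> lam z = 0"
  shows "exp (- (lam * of_real \<tau>0)) * (\<Sum>j<N. c j * (2 * kk \<mu> lam j / ((kk \<mu> lam j)\<^sup>2 - z\<^sup>2)))
     = lam + of_real \<alpha>"
proof -
  define D where "D j = z\<^sup>2 - (kk \<mu> lam j)\<^sup>2" for j
  have "D j = (z - kk \<mu> lam j) * (z + kk \<mu> lam j)" for j
    unfolding D_def by (simp add: power2_eq_square algebra_simps)
  then have "\<forall>j<N. D j \<noteq> 0"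
    using kne by (auto simp: add_eq_0_iff)
  moreover have "exp (lam * of_real \<tau>0) * (lam + of_real \<alpha>) / 2 * (\<Prod>j<N. D j)
      + (\<Sum>i<N. c i * kk \<mu> lam i * (\<Prod>j\<in>{..<N} - {i}. D j)) = 0"
    using root unfolding Ppoly_def D_def .
  ultimately have partial_fractions:
      "(\<Sum>j<N. c j * kk \<mu> lam j / D j) = - (exp (lam * of_real \<tau>0) * (lam + of_real \<alpha>) / 2)"
    by (rule sum_divide_eq_of_prod_eq)
  have "c j * (2 * kk \<mu> lam j / ((kk \<mu> lam j)\<^sup>2 - z\<^sup>2)) = - 2 * (c j * kk \<mu> lam j / D j)" for j
  proof -
    have "(kk \<mu> lam j)\<^sup>2 - z\<^sup>2 = - D j"
      unfolding D_def by simp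
    then show ?thesis
      by (simp add: divide_minus_right)
  qed
  then have "(\<Sum>j<N. c j * (2 * kk \<mu> lam j / ((kk \<mu> lam j)\<^sup>2 - z\<^sup>2)))
      = - 2 * (\<Sum>j<N. c j * kk \<mu> lam j / D j)"
    by (simp only: sum_distrib_left)
  also have "\<dots> = exp (lam * of_real \<tau>0) * (lam + of_real \<alpha>)"
    unfolding partial_fractions by simp
  finally show ?thesis
    by (simp add: mult.assoc[symmetric] mult_exp_exp)
qed

lemma sum_abs_exp_integral_collapse:
  fixes k c \<rho> g :: "nat \<Rightarrow> complex" and E L :: complex and x :: real
  assumes row: "\<forall>j<N. (\<Sum>i<N. g i * exp (\<rho> i) / (k j - \<rho> i) + g (N + i) * exp (- \<rho> i) / (k j + \<rho> i)) = 0"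
    and row': "\<forall>j<N. (\<Sum>i<N. g i * exp (- \<rho> i) / (k j + \<rho> i) + g (N + i) * exp (\<rho> i) / (k j - \<rho> i)) = 0"
    and char: "\<forall>i<N. E * (\<Sum>j<N. c j * (2 * k j / ((k j)\<^sup>2 - (\<rho> i)\<^sup>2))) = L"
  shows "(\<Sum>j<N. \<Sum>i<N. E * c j * (g i * abs_exp_integral (k j) (\<rho> i) x
            + g (N + i) * abs_exp_integral (k j) (- \<rho> i) x))
     = L * (\<Sum>i<N. g i * exp (\<rho> i * of_real x) + g (N + i) * exp (- \<rho> i * of_real x))"
proof -
  define v where "v i = g i * exp (\<rho> i * of_real x) + g (N + i) * exp (- \<rho> i * of_real x)" for i
  define w where "w j i = g i * exp (\<rho> i) / (k j - \<rho> i) + g (N + i) * exp (- \<rho> i) / (k j + \<rho> i)" for j i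
  define w' where "w' j i = g i * exp (- \<rho> i) / (k j + \<rho> i) + g (N + i) * exp (\<rho> i) / (k j - \<rho> i)" for j i
  have pointwise: "E * c j * (g i * abs_exp_integral (k j) (\<rho> i) x + g (N + i) * abs_exp_integral (k j) (- \<rho> i) x)
      = E * c j * (2 * k j / ((k j)\<^sup>2 - (\<rho> i)\<^sup>2)) * v i
        - E * c j * exp (- k j * (of_real x + 1)) * w' j i - E * c j * exp (k j * (of_real x - 1)) * w j i" for j i
    unfolding abs_exp_integral_def v_def w_def w'_def
    by (simp add: algebra_simps add_divide_distrib diff_divide_distrib)
  have "(\<Sum>j<N. \<Sum>i<N. E * c j * (g i * abs_exp_integral (k j) (\<rho> i) x
                + g (N + i) * abs_exp_integral (k j) (- \<rho> i) x))
      = (\<Sum>j<N. \<Sum>i<N. E * c j * (2 * k j / ((k j)\<^sup>2 - (\<rho> i)\<^sup>2)) * v i)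
        - (\<Sum>j<N. E * c j * exp (- k j * (of_real x + 1)) * (\<Sum>i<N. w' j i))
        - (\<Sum>j<N. E * c j * exp (k j * (of_real x - 1)) * (\<Sum>i<N. w j i))"
    by (simp add: pointwise sum_subtractf sum_distrib_left)
  also have "\<dots> = (\<Sum>j<N. \<Sum>i<N. E * c j * (2 * k j / ((k j)\<^sup>2 - (\<rho> i)\<^sup>2)) * v i)"
    using row row' by (simp add: w_def w'_def)
  also have "\<dots> = (\<Sum>i<N. \<Sum>j<N. E * c j * (2 * k j / ((k j)\<^sup>2 - (\<rho> i)\<^sup>2)) * v i)"
    by (rule sum.swap)
  also have "\<dots> = (\<Sum>i<N. L * v i)"
  proof (rule sum.cong[OF refl])
    fix i assume "i \<in> {..<N}"
    then have "L = E * (\<Sum>j<N. c j * (2 * k j / ((k j)\<^sup>2 - (\<rho> i)\<^sup>2)))"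
      using char by simp
    then show "(\<Sum>j<N. E * c j * (2 * k j / ((k j)\<^sup>2 - (\<rho> i)\<^sup>2)) * v i) = L * v i"
      by (simp only: sum_distrib_left sum_distrib_right mult.assoc)
  qed
  finally show ?thesis
    by (simp add: v_def sum_distrib_left)
qed

lemma sum_lessThan_double:
  fixes f :: "nat \<Rightarrow> 'a::comm_monoid_add"
  shows "(\<Sum>m<2 * N. f m) = (\<Sum>i<N. f i) + (\<Sum>i<N. f (N + i))"
proof -
  have "(\<Sum>m<N + M. f m) = (\<Sum>i<N. f i) + (\<Sum>i<M. f (N + i))" for M
    by (induction M) (simp_all add: add.assoc)
  from this[of N] show ?thesis
    by (simp add: mult_2)
qed

lemma Smat_mult_vec_eq_0_rows:
  assumes "\<Gamma> \<in> carrier_vec (2 * N)" and "Smat N \<mu> \<rho> lam *\<^sub>v \<Gamma> = 0\<^sub>v (2 * N)"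
  shows "\<forall>j<N. (\<Sum>i<N. \<Gamma> $ i * exp (\<rho> i) / (kk \<mu> lam j - \<rho> i)
                     + \<Gamma> $ (N + i) * exp (- \<rho> i) / (kk \<mu> lam j + \<rho> i)) = 0"
    and "\<forall>j<N. (\<Sum>i<N. \<Gamma> $ i * exp (- \<rho> i) / (kk \<mu> lam j + \<rho> i)
                     + \<Gamma> $ (N + i) * exp (\<rho> i) / (kk \<mu> lam j - \<rho> i)) = 0"
proof -
  have row: "(\<Sum>i<N. Smat N \<mu> \<rho> lam $$ (m, i) * \<Gamma> $ i)
      + (\<Sum>i<N. Smat N \<mu> \<rho> lam $$ (m, N + i) * \<Gamma> $ (N + i)) = 0" if "m < 2 * N" for m
  proof -
    have "(\<Sum>t<2 * N. Smat N \<mu> \<rho> lam $$ (m, t) * \<Gamma> $ t) = (Smat N \<mu> \<rho> lam *\<^sub>v \<Gamma>) $ m"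
      using assms(1) that by (simp add: Smat_def scalar_prod_def atLeast0LessThan)
    also have "\<dots> = 0"
      using assms(2) that by simp
    finally show ?thesis
      by (simp only: sum_lessThan_double)
  qed
  show "\<forall>j<N. (\<Sum>i<N. \<Gamma> $ i * exp (\<rho> i) / (kk \<mu> lam j - \<rho> i)
                     + \<Gamma> $ (N + i) * exp (- \<rho> i) / (kk \<mu> lam j + \<rho> i)) = 0"
  proof (intro allI impI)
    fix j assume "j < N"
    with row[of j] show "(\<Sum>i<N. \<Gamma> $ i * exp (\<rho> i) / (kk \<mu> lam j - \<rho> i)
                     + \<Gamma> $ (N + i) * exp (- \<rho> i) / (kk \<mu> lam j + \<rho> i)) = 0"
      by (simp add: Smat_def Sminus_def Splus_def kk_def sum.distrib algebra_simps)
  qed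
  show "\<forall>j<N. (\<Sum>i<N. \<Gamma> $ i * exp (- \<rho> i) / (kk \<mu> lam j + \<rho> i)
                     + \<Gamma> $ (N + i) * exp (\<rho> i) / (kk \<mu> lam j - \<rho> i)) = 0"
  proof (intro allI impI)
    fix j assume "j < N"
    with row[of "N + j"] show "(\<Sum>i<N. \<Gamma> $ i * exp (- \<rho> i) / (kk \<mu> lam j + \<rho> i)
                     + \<Gamma> $ (N + i) * exp (\<rho> i) / (kk \<mu> lam j - \<rho> i)) = 0"
      by (simp add: Smat_def Sminus_def Splus_def kk_def sum.distrib algebra_simps)
  qed
qed

lemma sum_exp_eq_0_imp_coeffs_0:
  fixes a b :: "nat \<Rightarrow> complex" and S :: "real set"
  assumes "finite I" and "inj_on a I" and "open S" and "S \<noteq> {}"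
    and "\<forall>x\<in>S. (\<Sum>m\<in>I. b m * exp (a m * of_real x)) = 0"
  shows "\<forall>m\<in>I. b m = 0"
  using assms(1,2,5)
proof (induction I arbitrary: b rule: finite_induct)
  case empty
  then show ?case by simp
next
  case (insert n I)
  have derivative_vanishes: "(\<Sum>m\<in>insert n I. b m * (a m * exp (a m * of_real x))) = 0" if "x \<in> S" for x
  proof -
    have "((\<lambda>z. \<Sum>m\<in>insert n I. b m * exp (a m * z)) has_field_derivative
        (\<Sum>m\<in>insert n I. b m * (a m * exp (a m * of_real x)))) (at (of_real x))"
      by (auto intro!: derivative_eq_intros sum.cong)
    then have "((\<lambda>x. \<Sum>m\<in>insert n I. b m * exp (a m * of_real x)) has_vector_derivative
        (\<Sum>m\<in>insert n I. b m * (a m * exp (a m * of_real x)))) (at x)"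
      by (rule has_vector_derivative_real_field)
    then have "((\<lambda>x. 0) has_vector_derivative
        (\<Sum>m\<in>insert n I. b m * (a m * exp (a m * of_real x)))) (at x)"
      by (rule has_vector_derivative_transform_within_open) (use assms(3) that insert.prems(2) in auto)
    from vector_derivative_unique_at[OF has_vector_derivative_const this] show ?thesis
      by simp
  qed
  \<comment> \<open>Subtracting a n times the sum from its derivative eliminates the n-th term.\<close>
  have "\<forall>x\<in>S. (\<Sum>m\<in>I. (b m * (a m - a n)) * exp (a m * of_real x)) = 0"
  proof
    fix x assume "x \<in> S"
    have "(\<Sum>m\<in>I. (b m * (a m - a n)) * exp (a m * of_real x))
        = (\<Sum>m\<in>insert n I. b m * (a m * exp (a m * of_real x)))
          - a n * (\<Sum>m\<in>insert n I. b m * exp (a m * of_real x))"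
      using insert.hyps by (simp add: sum_distrib_left sum_subtractf[symmetric] algebra_simps)
    then show "(\<Sum>m\<in>I. (b m * (a m - a n)) * exp (a m * of_real x)) = 0"
      using derivative_vanishes \<open>x \<in> S\<close> insert.prems(2) by simp
  qed
  moreover have "inj_on a I" and "a m \<noteq> a n" if "m \<in> I" for m
    using insert.prems(1) insert.hyps(2) that by (auto simp: inj_on_def)
  ultimately have rest: "\<forall>m\<in>I. b m = 0"
    using insert.IH by fastforce
  obtain x where "x \<in> S"
    using assms(4) by blast
  then have "b n * exp (a n * of_real x) = 0"
    using insert.prems(2) rest insert.hyps by auto
  with rest show ?case
    by simp
qed

lemma inj_on_signed_roots:
  fixes \<rho> :: "nat \<Rightarrow> 'a::ab_group_add"
  assumes distinct: "\<forall>i<N. \<forall>j<N. i \<noteq> j \<longrightarrow> \<rho> i \<noteq> \<rho> j \<and> \<rho> i \<noteq> - \<rho> j"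
    and nonzero: "\<forall>i<N. \<rho> i \<noteq> - \<rho> i"
  shows "inj_on (\<lambda>m. if m < N then \<rho> m else - \<rho> (m - N)) {..<2 * N}"
proof (rule inj_onI)
  fix m m' assume m: "m \<in> {..<2 * N}" and m': "m' \<in> {..<2 * N}"
    and eq: "(if m < N then \<rho> m else - \<rho> (m - N)) = (if m' < N then \<rho> m' else - \<rho> (m' - N))"
  have shifted: "m - N < N" "m' - N < N"
    using m m' by auto
  have opposite: False if "i < N" "j < N" "\<rho> i = - \<rho> j" for i j
    using distinct nonzero that by (cases "i = j") auto
  show "m = m'"
  proof (cases "m < N"; cases "m' < N")
    assume "m < N" "m' < N"
    then show ?thesis using eq distinct by auto
  next
    assume "m < N" "\<not> m' < N"
    then show ?thesis using eq shifted opposite[of m "m' - N"] by auto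
  next
    assume "\<not> m < N" "m' < N"
    then show ?thesis using eq shifted opposite[of m' "m - N"] by (auto simp: eq_neg_iff_add_eq_0 add.commute)
  next
    assume "\<not> m < N" "\<not> m' < N"
    then have "m - N = m' - N"
      using eq shifted distinct by auto
    with \<open>\<not> m < N\<close> \<open>\<not> m' < N\<close> show ?thesis
      by simp
  qed
qed

lemma qfun_nonzero:
  assumes "\<forall>i<N. \<forall>j<N. i \<noteq> j \<longrightarrow> \<rho> i \<noteq> \<rho> j \<and> \<rho> i \<noteq> - \<rho> j"
    and "\<forall>i<N. \<rho> i \<noteq> - \<rho> i"
    and "\<Gamma> \<in> carrier_vec (2 * N)" and "\<Gamma> \<noteq> 0\<^sub>v (2 * N)"
  shows "\<exists>x\<in>{-1..1}. qfun N \<rho> \<Gamma> x \<noteq> 0"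
proof (rule ccontr)
  assume vanishes: "\<not> ?thesis"
  define a where "a m = (if m < N then \<rho> m else - \<rho> (m - N))" for m
  have "inj_on a {..<2 * N}"
    unfolding a_def using assms(1,2) by (rule inj_on_signed_roots)
  moreover have "\<forall>x\<in>{-1<..<1}. (\<Sum>m\<in>{..<2 * N}. \<Gamma> $ m * exp (a m * of_real x)) = 0"
    using vanishes by (auto simp: qfun_def sum_lessThan_double a_def sum.distrib)
  ultimately have "\<forall>m<2 * N. \<Gamma> $ m = 0"
    using sum_exp_eq_0_imp_coeffs_0[of "{..<2 * N}" a "{-1<..<1}"] by auto
  then have "\<Gamma> = 0\<^sub>v (2 * N)"
    using assms(3) by (intro eq_vecI) auto
  with assms(4) show False ..
qed

lemma eigenfunction_eps_tensor_qfun: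
  assumes "\<tau>0 \<ge> 0"
    and distinct: "\<forall>i<N. \<forall>j<N. i \<noteq> j \<longrightarrow> \<rho> i \<noteq> \<rho> j \<and> \<rho> i \<noteq> - \<rho> j"
    and nonzero: "\<forall>i<N. \<rho> i \<noteq> - \<rho> i"
    and roots: "\<forall>i<N. Ppoly N \<alpha> \<tau>0 c \<mu> lam (\<rho> i) = 0"
    and kne: "\<forall>i<N. \<forall>j<N. kk \<mu> lam j \<noteq> \<rho> i \<and> kk \<mu> lam j \<noteq> - \<rho> i"
    and \<Gamma>: "\<Gamma> \<in> carrier_vec (2 * N)" "\<Gamma> \<noteq> 0\<^sub>v (2 * N)" "Smat N \<mu> \<rho> lam *\<^sub>v \<Gamma> = 0\<^sub>v (2 * N)"
  shows "eigenfunction N \<alpha> \<tau>0 c \<mu> lam (eps_tensor lam (qfun N \<rho> \<Gamma>))"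
proof -
  obtain x0 where "x0 \<in> {-1..1}" and "qfun N \<rho> \<Gamma> x0 \<noteq> 0"
    using qfun_nonzero[OF distinct nonzero \<Gamma>(1,2)] by blast
  have char: "\<forall>i<N. exp (- (lam * of_real \<tau>0)) *
      (\<Sum>j<N. c j * (2 * kk \<mu> lam j / ((kk \<mu> lam j)\<^sup>2 - (\<rho> i)\<^sup>2))) = lam + of_real \<alpha>"
    using kne roots by (blast intro: Ppoly_root_imp_char_eq)
  have boundary: "Lop N c \<mu> \<tau>0 (eps_tensor lam (qfun N \<rho> \<Gamma>)) x = (lam + of_real \<alpha>) * qfun N \<rho> \<Gamma> x"
    if "x \<in> {-1..1}" for x
    unfolding Lop_eps_tensor_qfun[OF kne that] qfun_def
    by (rule sum_abs_exp_integral_collapse[OF Smat_mult_vec_eq_0_rows[OF \<Gamma>(1,3)] char])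
  have "continuous_on {-1..1} (qfun N \<rho> \<Gamma>)"
    unfolding qfun_def by (intro continuous_intros)
  then show ?thesis
    using \<open>\<tau>0 \<ge> 0\<close> \<open>x0 \<in> {-1..1}\<close> \<open>qfun N \<rho> \<Gamma> x0 \<noteq> 0\<close> boundary
    by (rule eigenfunction_eps_tensorI)
qed

theorem theorem3p17:
  fixes N :: nat and \<alpha> \<tau>0 :: real and c \<mu> \<rho> :: "nat \<Rightarrow> complex" and lam :: complex
  assumes "N \<ge> 1" and "\<alpha> > 0" and "\<tau>0 \<ge> 0"
    and "\<forall>i<N. c i \<noteq> 0"
    and "\<forall>i<N. \<forall>j<N. i \<noteq> j \<longrightarrow> \<mu> i \<noteq> \<mu> j"
    and "lam \<notin> Sset N \<mu>"
    and "\<forall>i<N. \<forall>j<N. i \<noteq> j \<longrightarrow> \<rho> i \<noteq> \<rho> j \<and> \<rho> i \<noteq> - \<rho> j"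
    and "\<forall>i<N. \<rho> i \<noteq> - \<rho> i"
    and "{z. Ppoly N \<alpha> \<tau>0 c \<mu> lam z = 0} = \<rho> ` {..<N} \<union> (\<lambda>i. - \<rho> i) ` {..<N}"
    and "det (Smat N \<mu> \<rho> lam) = 0"
    and "\<forall>i<N. \<forall>j<N. kk \<mu> lam j \<noteq> \<rho> i \<and> kk \<mu> lam j \<noteq> - \<rho> i"
  shows "lam \<in> point_spectrum N \<alpha> \<tau>0 c \<mu> \<and>
    (\<forall>\<Gamma> \<in> carrier_vec (2 * N). \<Gamma> \<noteq> 0\<^sub>v (2 * N) \<and> Smat N \<mu> \<rho> lam *\<^sub>v \<Gamma> = 0\<^sub>v (2 * N) \<longrightarrow>
       eigenfunction N \<alpha> \<tau>0 c \<mu> lam (eps_tensor lam (qfun N \<rho> \<Gamma>)))"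
proof -
  have "\<forall>i<N. Ppoly N \<alpha> \<tau>0 c \<mu> lam (\<rho> i) = 0"
    using assms(9) by blast
  then have eigen: "\<forall>\<Gamma> \<in> carrier_vec (2 * N). \<Gamma> \<noteq> 0\<^sub>v (2 * N) \<and> Smat N \<mu> \<rho> lam *\<^sub>v \<Gamma> = 0\<^sub>v (2 * N) \<longrightarrow>
      eigenfunction N \<alpha> \<tau>0 c \<mu> lam (eps_tensor lam (qfun N \<rho> \<Gamma>))"
    using eigenfunction_eps_tensor_qfun[OF assms(3,7,8) _ assms(11)] by blast
  have "Smat N \<mu> \<rho> lam \<in> carrier_mat (2 * N) (2 * N)"
    by (simp add: Smat_def)
  then obtain \<Gamma> where "\<Gamma> \<in> carrier_vec (2 * N)" "\<Gamma> \<noteq> 0\<^sub>v (2 * N)" "Smat N \<mu> \<rho> lam *\<^sub>v \<Gamma> = 0\<^sub>v (2 * N)"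
    using det_0_iff_vec_prod_zero assms(10) by blast
  with eigen have "lam \<in> point_spectrum N \<alpha> \<tau>0 c \<mu>"
    unfolding point_spectrum_def by blast
  with eigen show ?thesis
    by blast
qed

end
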